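(* Let $M\ge2$ and $N\ge2$ be integers. The $N^M$ standard oracle operators $U_f$, where $f$ ranges over all functions $\mathbb{Z}_M\to\mathbb{Z}_N$, are not unambiguously distinguishable.
   Context: Let $\mathcal{H}_M,\mathcal{H}_N$ be Hilbert spaces with orthonormal computational bases $\{|x\rangle\}_{x\in\mathbb{Z}_M}$, $\{|y\rangle\}_{y\in\mathbb{Z}_N}$. For $f:\mathbb{Z}_M\to\mathbb{Z}_N$ the standard oracle operator is the unitary $U_f$ on $\mathcal{H}_M\otimes\mathcal{H}_N$ with $U_f|x\rangle\otimes|y\rangle=|x\rangle\otimes|y\oplus f(x)\rangle$, $\oplus$ being addition mod $N$. A finite list of unitary operators $W_1,\ldots,W_K$ on a finite-dimensional Hilbert space $\mathcal{H}$ is called unambiguously distinguishable if there exist a finite-dimensional ancilla space $\mathcal{H}_A$ and a unit vector $|\psi\rangle\in\mathcal{H}\otimes\mathcal{H}_A$ such that the vectors $(W_j\otimes\mathbb{1}_A)|\psi\rangle$ are linearly independent. *)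

theory Defs
  imports Complex_Main "HOL-Library.FuncSet"
begin

text \<open>A finite-dimensional Hilbert space with orthonormal basis indexed by a finite set B;
  vectors are coordinate functions B -> complex, operators are matrices B x B -> complex.
  The ancilla space has dimension d with basis indexed by {..<d}; a vector of the tensor product
  is a function psi b a.\<close>

definition tensor_id_apply :: "'b set \<Rightarrow> ('b \<Rightarrow> 'b \<Rightarrow> complex) \<Rightarrow> ('b \<Rightarrow> nat \<Rightarrow> complex) \<Rightarrow> ('b \<Rightarrow> nat \<Rightarrow> complex)" where
  "tensor_id_apply B W psi = (\<lambda>b a. \<Sum>b'\<in>B. W b b' * psi b' a)"

definition unit_vec_tensor :: "'b set \<Rightarrow> nat \<Rightarrow> ('b \<Rightarrow> nat \<Rightarrow> complex) \<Rightarrow> bool" where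
  "unit_vec_tensor B d psi \<longleftrightarrow> (\<Sum>b\<in>B. \<Sum>a<d. (cmod (psi b a))\<^sup>2) = 1"

definition lin_indep_family :: "'b set \<Rightarrow> nat \<Rightarrow> 'k set \<Rightarrow> ('k \<Rightarrow> 'b \<Rightarrow> nat \<Rightarrow> complex) \<Rightarrow> bool" where
  "lin_indep_family B d K v \<longleftrightarrow>
     (\<forall>c :: 'k \<Rightarrow> complex. (\<forall>b\<in>B. \<forall>a<d. (\<Sum>k\<in>K. c k * v k b a) = 0) \<longrightarrow> (\<forall>k\<in>K. c k = 0))"

definition unamb_distinguishable :: "'b set \<Rightarrow> 'k set \<Rightarrow> ('k \<Rightarrow> 'b \<Rightarrow> 'b \<Rightarrow> complex) \<Rightarrow> bool" where
  "unamb_distinguishable B K W \<longleftrightarrow>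
     (\<exists>(d::nat) (psi :: 'b \<Rightarrow> nat \<Rightarrow> complex).
        unit_vec_tensor B d psi \<and>
        lin_indep_family B d K (\<lambda>k. tensor_id_apply B (W k) psi))"

text \<open>Standard oracle U_f on C^M (x) C^N (basis {..<M} x {..<N}):
  U_f |x',y'> = |x', (y' + f x') mod N>, so the matrix entry at row (x,y), column (x',y')
  is 1 iff x = x' and y = (y' + f x') mod N.\<close>
definition std_oracle :: "nat \<Rightarrow> (nat \<Rightarrow> nat) \<Rightarrow> (nat \<times> nat) \<Rightarrow> (nat \<times> nat) \<Rightarrow> complex" where
  "std_oracle N f = (\<lambda>(x, y) (x', y'). if x = x' \<and> y = (y' + f x') mod N then 1 else 0)"

end

theory Submission
  imports Defs
begin

text \<open>The oracle matrix is U_f = \<Sum>x. |x\<rangle>\<langle>x| \<otimes> X^(f x) with X the cyclic shift, so it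
  depends additively on the graph of f: exchanging the values of f and g on any set of arguments
  does not change U_f + U_g. With \<chi>_S the indicator function of S, this gives the nontrivial
  linear relation U_\<chi>_{} + U_\<chi>_{0,1} = U_\<chi>_{0} + U_\<chi>_{1} among the oracles as soon as
  M, N \<ge> 2, and a linear relation among operators persists after applying them to any probe
  state, so the outputs are never linearly independent.\<close>

lemma sum_tensor_id_apply:
  assumes "finite K"
  shows "(\<Sum>k\<in>K. c k * tensor_id_apply B (W k) psi b a)
       = tensor_id_apply B (\<lambda>b b'. \<Sum>k\<in>K. c k * W k b b') psi b a"
  using assms unfolding tensor_id_apply_def
  by (simp add: sum_distrib_left sum_distrib_right mult.assoc sum.swap[of _ K])

lemma not_unamb_distinguishable_if_linear_relation:
  assumes "finite K" and "k\<^sub>0 \<in> K" and "c k\<^sub>0 \<noteq> 0"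
    and relation: "\<And>b b'. (\<Sum>k\<in>K. c k * W k b b') = 0"
  shows "\<not> unamb_distinguishable B K W"
proof
  assume "unamb_distinguishable B K W"
  then obtain d psi where indep: "lin_indep_family B d K (\<lambda>k. tensor_id_apply B (W k) psi)"
    unfolding unamb_distinguishable_def by blast
  have "(\<Sum>k\<in>K. c k * tensor_id_apply B (W k) psi b a) = 0" for b a
    by (subst sum_tensor_id_apply[OF \<open>finite K\<close>]) (simp add: relation tensor_id_apply_def)
  with indep have "c k\<^sub>0 = 0"
    using \<open>k\<^sub>0 \<in> K\<close> unfolding lin_indep_family_def by blast
  with \<open>c k\<^sub>0 \<noteq> 0\<close> show False ..
qed

lemma not_unamb_distinguishable_if_exchange:
  assumes "finite K" and "f \<in> K" "g \<in> K" "f' \<in> K" "g' \<in> K" and "f \<noteq> f'" "f \<noteq> g'"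
    and exchange: "\<And>b b'. W f b b' + W g b b' = W f' b b' + W g' b b'"
  shows "\<not> unamb_distinguishable B K W"
proof -
  define c :: "_ \<Rightarrow> complex" where
    "c k = of_bool (k = f) + of_bool (k = g) - of_bool (k = f') - of_bool (k = g')" for k
  have pick: "(\<Sum>k\<in>K. of_bool (k = h) * v k) = v h" if "h \<in> K" for h and v :: "_ \<Rightarrow> complex"
    using that \<open>finite K\<close> by simp
  have "(\<Sum>k\<in>K. c k * W k b b') = W f b b' + W g b b' - W f' b b' - W g' b b'" for b b'
    unfolding c_def
    by (simp add: ring_distribs sum.distrib sum_subtractf pick assms(2-5))
  then have "(\<Sum>k\<in>K. c k * W k b b') = 0" for b b'
    by (simp add: exchange)
  moreover have "c f \<noteq> 0"
    using \<open>f \<noteq> f'\<close> \<open>f \<noteq> g'\<close> by (simp add: c_def)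
  ultimately show ?thesis
    using not_unamb_distinguishable_if_linear_relation[OF \<open>finite K\<close> \<open>f \<in> K\<close>] by blast
qed

lemma std_oracle_exchange:
  assumes "\<And>x. (f' x = f x \<and> g' x = g x) \<or> (f' x = g x \<and> g' x = f x)"
  shows "std_oracle N f p q + std_oracle N g p q = std_oracle N f' p q + std_oracle N g' p q"
  using assms[of "fst q"]
  by (cases p; cases q) (auto simp: std_oracle_def)

definition indicator_oracle_fun :: "nat \<Rightarrow> nat set \<Rightarrow> nat \<Rightarrow> nat" where
  "indicator_oracle_fun M S = (\<lambda>x\<in>{..<M}. of_bool (x \<in> S))"

lemma indicator_oracle_fun_in_PiE:
  "N \<ge> 2 \<Longrightarrow> indicator_oracle_fun M S \<in> {..<M} \<rightarrow>\<^sub>E {..<N}"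
  by (auto simp: indicator_oracle_fun_def)

lemma indicator_oracle_fun_neq:
  assumes "x < M" "x \<in> S" "x \<notin> T"
  shows "indicator_oracle_fun M S \<noteq> indicator_oracle_fun M T"
proof
  assume "indicator_oracle_fun M S = indicator_oracle_fun M T"
  then have "indicator_oracle_fun M S x = indicator_oracle_fun M T x" by simp
  with assms show False by (simp add: indicator_oracle_fun_def)
qed

lemma std_oracle_indicator_Int_Un:
  "std_oracle N (indicator_oracle_fun M (A \<inter> B)) p q + std_oracle N (indicator_oracle_fun M (A \<union> B)) p q
   = std_oracle N (indicator_oracle_fun M A) p q + std_oracle N (indicator_oracle_fun M B) p q"
  by (rule std_oracle_exchange) (simp add: indicator_oracle_fun_def)

theorem theorem4:
  fixes M N :: nat
  assumes "M \<ge> 2" and "N \<ge> 2"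
  shows "\<not> unamb_distinguishable ({..<M} \<times> {..<N}) ({..<M} \<rightarrow>\<^sub>E {..<N}) (std_oracle N)"
proof (rule not_unamb_distinguishable_if_exchange)
  let ?\<chi> = "indicator_oracle_fun M"
  show "finite ({..<M} \<rightarrow>\<^sub>E {..<N})"
    by (simp add: finite_PiE)
  show "?\<chi> ({0} \<inter> {1}) \<in> {..<M} \<rightarrow>\<^sub>E {..<N}" "?\<chi> ({0} \<union> {1}) \<in> {..<M} \<rightarrow>\<^sub>E {..<N}"
    "?\<chi> {0} \<in> {..<M} \<rightarrow>\<^sub>E {..<N}" "?\<chi> {1} \<in> {..<M} \<rightarrow>\<^sub>E {..<N}"
    using \<open>N \<ge> 2\<close> by (simp_all add: indicator_oracle_fun_in_PiE)
  show "?\<chi> ({0} \<inter> {1}) \<noteq> ?\<chi> {0}" "?\<chi> ({0} \<inter> {1}) \<noteq> ?\<chi> {1}"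
    using \<open>M \<ge> 2\<close> indicator_oracle_fun_neq[of 0 M "{0}" "{}"] indicator_oracle_fun_neq[of 1 M "{1}" "{}"]
    by auto
  show "std_oracle N (?\<chi> ({0} \<inter> {1})) b b' + std_oracle N (?\<chi> ({0} \<union> {1})) b b'
      = std_oracle N (?\<chi> {0}) b b' + std_oracle N (?\<chi> {1}) b b'" for b b'
    by (rule std_oracle_indicator_Int_Un)
qed

end
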